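(* In symmetric private information retrieval with $N=2$ databases and $K=3$ messages of length $L=1$, with upload cost $U=4$, the optimal total communication cost $U+D$ is $4+2=6$, and the minimal amount of required common randomness is $H(\mathcal{R})=1$.
   Context: SPIR setting: each of $N$ non-colluding databases stores the same $K$ i.i.d. messages $W_1,\dots,W_K$, each consisting of $L$ i.i.d. uniform symbols from a sufficiently large finite field $\mathbb{F}_q$ (entropies in $q$-ary units, $H(W_k)=L$). The user wants $W_k$ with private randomness $\mathcal{F}$; the databases share common randomness $\mathcal{R}$, with $I(W_{1:K};k,\mathcal{F},\mathcal{R})=0$. Queries $Q_n^{[k]}$ are deterministic functions of $\mathcal{F}$; answers satisfy $H(A_n^{[k]}\mid Q_n^{[k]},W_{1:K},\mathcal{R})=0$. Achievability requires reliability $H(W_k\mid\mathcal{F},A_{1:N}^{[k]})=0$; user privacy: for all $n$ and $k'\neq k$, $(Q_n^{[k]},A_n^{[k]},W_{1:K},\mathcal{R})\sim(Q_n^{[k']},A_n^{[k']},W_{1:K},\mathcal{R})$; database privacy $I(W_{\bar k};\mathcal{F},A_{1:N}^{[k]})=0$ with $W_{\bar k}=\{W_j:j\neq k\}$. Upload cost $U$: total number of bits sent from user to databases ($U=4$ when each of the two queries takes one of 4 values). Download cost $D$: total size of the answers (in the same units as $L$). Total communication cost is $U+D$. *)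

theory Defs
  imports "HOL-Probability.Probability" "HOL-Library.Numeral_Type"
begin

definition pmf_ent :: "real \<Rightarrow> 'b pmf \<Rightarrow> real" where
  "pmf_ent b p = - (\<Sum>x\<in>set_pmf p. pmf p x * log b (pmf p x))"

definition rv_ent :: "real \<Rightarrow> 'o pmf \<Rightarrow> ('o \<Rightarrow> 'b) \<Rightarrow> real" where
  "rv_ent b M X = pmf_ent b (map_pmf X M)"

definition cond_ent :: "real \<Rightarrow> 'o pmf \<Rightarrow> ('o \<Rightarrow> 'b) \<Rightarrow> ('o \<Rightarrow> 'c) \<Rightarrow> real" where
  "cond_ent b M X Y = rv_ent b M (\<lambda>\<omega>. (X \<omega>, Y \<omega>)) - rv_ent b M Y"

definition mut_info :: "real \<Rightarrow> 'o pmf \<Rightarrow> ('o \<Rightarrow> 'b) \<Rightarrow> ('o \<Rightarrow> 'c) \<Rightarrow> real" where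
  "mut_info b M X Y = rv_ent b M X + rv_ent b M Y - rv_ent b M (\<lambda>\<omega>. (X \<omega>, Y \<omega>))"

text \<open>Sample point: (W, F, R) with W : 3 \<Rightarrow> 'f the three messages (one symbol each),
  F the user's private randomness, R the databases' common randomness (both encoded in nat).
  Queries Q n k F (database n, desired message k); answers Ans n q W R.\<close>

type_synonym 'f sample = "(3 \<Rightarrow> 'f) \<times> nat \<times> nat"

definition joint :: "nat pmf \<Rightarrow> nat pmf \<Rightarrow> ('f::finite) sample pmf" where
  "joint pF pR = pair_pmf (pmf_of_set UNIV) (pair_pmf pF pR)"

definition msg_rv :: "3 \<Rightarrow> 'f sample \<Rightarrow> 'f" where
  "msg_rv k = (\<lambda>(w, f, r). w k)"

definition others_rv :: "3 \<Rightarrow> 'f sample \<Rightarrow> (3 \<Rightarrow> 'f option)" where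
  "others_rv k = (\<lambda>(w, f, r). (\<lambda>j. if j = k then None else Some (w j)))"

definition user_rv :: "'f sample \<Rightarrow> nat" where
  "user_rv = (\<lambda>(w, f, r). f)"

definition query_rv :: "(2 \<Rightarrow> 3 \<Rightarrow> nat \<Rightarrow> nat) \<Rightarrow> 2 \<Rightarrow> 3 \<Rightarrow> 'f sample \<Rightarrow> nat" where
  "query_rv Q n k = (\<lambda>(w, f, r). Q n k f)"

definition ans_rv :: "(2 \<Rightarrow> 3 \<Rightarrow> nat \<Rightarrow> nat) \<Rightarrow> (2 \<Rightarrow> nat \<Rightarrow> (3 \<Rightarrow> 'f) \<Rightarrow> nat \<Rightarrow> nat)
    \<Rightarrow> 2 \<Rightarrow> 3 \<Rightarrow> 'f sample \<Rightarrow> nat" where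
  "ans_rv Q Ans n k = (\<lambda>(w, f, r). Ans n (Q n k f) w r)"

definition qbase :: "'f itself \<Rightarrow> real" where
  "qbase _ = real CARD('f)"

definition spir_scheme ::
  "nat pmf \<Rightarrow> nat pmf \<Rightarrow> (2 \<Rightarrow> 3 \<Rightarrow> nat \<Rightarrow> nat) \<Rightarrow> (2 \<Rightarrow> nat \<Rightarrow> (3 \<Rightarrow> 'f::finite) \<Rightarrow> nat \<Rightarrow> nat) \<Rightarrow> bool"
where
  "spir_scheme pF pR Q Ans \<longleftrightarrow>
     finite (set_pmf pF) \<and> finite (set_pmf pR) \<and>
     \<comment> \<open>reliability: H(W_k | F, A_{1:N}) = 0\<close>
     (\<forall>k. cond_ent (qbase TYPE('f)) (joint pF pR) (msg_rv k)
            (\<lambda>\<omega>. (user_rv \<omega>, \<lambda>n. ans_rv Q Ans n k \<omega>)) = 0) \<and>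
     \<comment> \<open>user privacy: (Q_n, A_n, W, R) identically distributed for all k\<close>
     (\<forall>n k k'. map_pmf (\<lambda>\<omega>. (query_rv Q n k \<omega>, ans_rv Q Ans n k \<omega>, fst \<omega>, snd (snd \<omega>))) (joint pF pR)
             = map_pmf (\<lambda>\<omega>. (query_rv Q n k' \<omega>, ans_rv Q Ans n k' \<omega>, fst \<omega>, snd (snd \<omega>))) (joint pF pR)) \<and>
     \<comment> \<open>database privacy: I(W_kbar; F, A_{1:N}) = 0\<close>
     (\<forall>k. mut_info (qbase TYPE('f)) (joint pF pR) (others_rv k)
            (\<lambda>\<omega>. (user_rv \<omega>, \<lambda>n. ans_rv Q Ans n k \<omega>)) = 0)"

definition upload :: "nat pmf \<Rightarrow> (2 \<Rightarrow> 3 \<Rightarrow> nat \<Rightarrow> nat) \<Rightarrow> real" where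
  "upload pF Q = (\<Sum>n\<in>UNIV. log 2 (real (card (\<Union>k. Q n k ` set_pmf pF))))"

definition download :: "nat pmf \<Rightarrow> nat pmf \<Rightarrow> (2 \<Rightarrow> 3 \<Rightarrow> nat \<Rightarrow> nat)
    \<Rightarrow> (2 \<Rightarrow> nat \<Rightarrow> (3 \<Rightarrow> 'f::finite) \<Rightarrow> nat \<Rightarrow> nat) \<Rightarrow> real" where
  "download pF pR Q Ans = (\<Sum>n\<in>UNIV. log (qbase TYPE('f))
       (real (card (\<Union>k. ans_rv Q Ans n k ` set_pmf (joint pF pR)))))"

definition cr_amount :: "'f itself \<Rightarrow> nat pmf \<Rightarrow> real" where
  "cr_amount t pR = pmf_ent (qbase t) pR"

end

theory Submission
  imports Defs
begin

text \<open>Converse: by user privacy, the answer \<open>A\<^sub>n\<close> of a database for message \<open>k\<close> is distributed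
  like its answer for another message \<open>k'\<close>, and by database privacy that answer reveals nothing
  about \<open>W\<^sub>k\<close>; hence \<open>A\<^sub>n\<close> is independent of \<open>W\<^sub>k\<close> given the user's randomness \<open>F\<close>.
  Reliability then forces every answer to carry a full symbol, so \<open>D \<ge> 2\<close>, and the two answers
  together to carry two symbols beyond \<open>F\<close>. As they must hide the two undesired messages,
  which carry two symbols, the common randomness has to supply at least one symbol.

  Achievability: the user sends one of the four even-weight vectors \<open>u\<close> of \<open>{0,1}\<^sup>3\<close>, chosen
  uniformly, to database 1 and the odd-weight vector \<open>u \<plusminus> e\<^sub>k\<close> to database 2; both return the inner
  product with \<open>W\<close> plus the common uniform key \<open>R\<close>, and the difference of the answers is \<open>\<plusminus>W\<^sub>k\<close>.
  Each database sees a uniform query among four values and a uniform answer.\<close>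

lemma pmf_map_eq_sum:
  assumes "finite A" "set_pmf p \<subseteq> A"
  shows "pmf (map_pmf f p) y = (\<Sum>a\<in>{a\<in>A. f a = y}. pmf p a)"
proof -
  have "pmf (map_pmf f p) y = measure_pmf.prob p (f -` {y} \<inter> set_pmf p)"
    by (simp add: pmf_map measure_Int_set_pmf)
  also have "f -` {y} \<inter> set_pmf p = {a\<in>A. f a = y} \<inter> set_pmf p"
    using assms by auto
  also have "measure_pmf.prob p \<dots> = (\<Sum>a\<in>{a\<in>A. f a = y}. pmf p a)"
    using assms by (simp add: measure_Int_set_pmf measure_measure_pmf_finite)
  finally show ?thesis .
qed

lemma pmf_map_pos: "\<omega> \<in> set_pmf M \<Longrightarrow> 0 < pmf (map_pmf X M) (X \<omega>)"
  by (simp add: pmf_positive)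

lemma sum_set_pmf_map:
  assumes fin: "finite (set_pmf M)"
  shows "(\<Sum>\<omega>\<in>set_pmf M. pmf M \<omega> * g (V \<omega>)) = (\<Sum>v\<in>V ` set_pmf M. pmf (map_pmf V M) v * g v)"
proof -
  have "(\<Sum>\<omega>\<in>set_pmf M. pmf M \<omega> * g (V \<omega>)) =
     (\<Sum>v\<in>V ` set_pmf M. \<Sum>\<omega>\<in>{\<omega>\<in>set_pmf M. V \<omega> = v}. pmf M \<omega> * g v)"
    using fin by (subst sum.image_gen) (auto intro!: sum.cong)
  also have "\<dots> = (\<Sum>v\<in>V ` set_pmf M. pmf (map_pmf V M) v * g v)"
    using fin by (simp add: pmf_map_eq_sum[OF fin order_refl] sum_distrib_right)
  finally show ?thesis .
qed

lemma sum_pmf_map_pair_marginal: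
  assumes fin: "finite (set_pmf M)"
  shows "(\<Sum>x\<in>X ` set_pmf M. pmf (map_pmf (\<lambda>\<omega>. (X \<omega>, Z \<omega>)) M) (x, z)) = pmf (map_pmf Z M) z"
proof -
  let ?p = "map_pmf (\<lambda>\<omega>. (X \<omega>, Z \<omega>)) M"
  have "pmf (map_pmf Z M) z = pmf (map_pmf snd ?p) z"
    by (simp add: pmf.map_comp o_def)
  also have "\<dots> = (\<Sum>a\<in>{a \<in> X ` set_pmf M \<times> insert z (Z ` set_pmf M). snd a = z}. pmf ?p a)"
    using fin by (intro pmf_map_eq_sum) auto
  also have "{a \<in> X ` set_pmf M \<times> insert z (Z ` set_pmf M). snd a = z} = (\<lambda>x. (x, z)) ` X ` set_pmf M"
    by auto
  also have "(\<Sum>a\<in>(\<lambda>x. (x, z)) ` X ` set_pmf M. pmf ?p a) = (\<Sum>x\<in>X ` set_pmf M. pmf ?p (x, z))"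
    by (simp add: sum.reindex inj_on_def)
  finally show ?thesis ..
qed

lemma rv_ent_eq_sum:
  assumes "finite (set_pmf M)"
  shows "rv_ent b M X = - (\<Sum>\<omega>\<in>set_pmf M. pmf M \<omega> * log b (pmf (map_pmf X M) (X \<omega>)))"
  unfolding rv_ent_def pmf_ent_def by (subst sum_set_pmf_map[OF assms]) simp

lemma pmf_ent_map_inj:
  assumes "inj_on g (set_pmf p)"
  shows "pmf_ent b (map_pmf g p) = pmf_ent b p"
  unfolding pmf_ent_def using assms by (simp add: sum.reindex pmf_map_inj)

lemma rv_ent_cong:
  "(\<And>\<omega>. \<omega> \<in> set_pmf M \<Longrightarrow> X \<omega> = Y \<omega>) \<Longrightarrow> rv_ent b M X = rv_ent b M Y"
  unfolding rv_ent_def by (simp cong: map_pmf_cong)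

lemma rv_ent_comp_inj:
  assumes "inj_on g (X ` set_pmf M)"
  shows "rv_ent b M (\<lambda>\<omega>. g (X \<omega>)) = rv_ent b M X"
  using assms unfolding rv_ent_def by (simp add: map_pmf_comp[symmetric] pmf_ent_map_inj)

lemma rv_ent_comp_cong_distr:
  assumes "map_pmf T M = map_pmf T' M"
  shows "rv_ent b M (\<lambda>\<omega>. g (T \<omega>)) = rv_ent b M (\<lambda>\<omega>. g (T' \<omega>))"
  using assms unfolding rv_ent_def by (metis map_pmf_comp)

lemma rv_ent_partition_cong:
  assumes "\<And>x y. x \<in> set_pmf M \<Longrightarrow> y \<in> set_pmf M \<Longrightarrow> X x = X y \<longleftrightarrow> Y x = Y y"
  shows "rv_ent b M X = rv_ent b M Y"
proof -
  define g where "g a = Y (SOME \<omega>. \<omega> \<in> set_pmf M \<and> X \<omega> = a)" for a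
  have g: "g (X \<omega>) = Y \<omega>" if "\<omega> \<in> set_pmf M" for \<omega>
  proof -
    have "\<exists>\<omega>'. \<omega>' \<in> set_pmf M \<and> X \<omega>' = X \<omega>"
      using that by blast
    from someI_ex[OF this] show ?thesis
      unfolding g_def using assms that by blast
  qed
  have "inj_on g (X ` set_pmf M)"
    by (auto simp: inj_on_def g assms)
  then have "rv_ent b M (\<lambda>\<omega>. g (X \<omega>)) = rv_ent b M X"
    by (rule rv_ent_comp_inj)
  moreover have "rv_ent b M (\<lambda>\<omega>. g (X \<omega>)) = rv_ent b M Y"
    by (rule rv_ent_cong) (simp add: g)
  ultimately show ?thesis by simp
qed

lemma rv_ent_const: "rv_ent b M (\<lambda>\<omega>. c) = 0"
  unfolding rv_ent_def pmf_ent_def by simp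

lemma gibbs_inequality:
  fixes b :: real
  assumes b: "1 < b" and "finite S" and p: "\<And>x. x \<in> S \<Longrightarrow> 0 \<le> p x" and sp: "sum p S = 1"
    and r: "\<And>x. x \<in> S \<Longrightarrow> 0 < r x" and spr: "(\<Sum>x\<in>S. p x * r x) \<le> 1"
  shows "(\<Sum>x\<in>S. p x * log b (r x)) \<le> 0"
proof -
  have lb: "0 < ln b"
    using b by simp
  have "(\<Sum>x\<in>S. p x * log b (r x)) \<le> (\<Sum>x\<in>S. p x * ((r x - 1) / ln b))"
  proof (intro sum_mono mult_left_mono p)
    fix x assume x: "x \<in> S"
    have "ln (r x) \<le> r x - 1"
      using r[OF x] by (rule ln_le_minus_one)
    then show "log b (r x) \<le> (r x - 1) / ln b"
      unfolding log_def using lb by (simp add: divide_right_mono)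
  qed
  also have "\<dots> = ((\<Sum>x\<in>S. p x * r x) - sum p S) / ln b"
    by (simp add: sum_divide_distrib[symmetric] right_diff_distrib sum_subtractf)
  also have "\<dots> \<le> 0"
    using spr sp lb by (simp add: divide_nonpos_pos)
  finally show ?thesis .
qed

lemma rv_ent_le_pair:
  assumes b: "1 < b" and fin: "finite (set_pmf M)"
  shows "rv_ent b M Y \<le> rv_ent b M (\<lambda>\<omega>. (X \<omega>, Y \<omega>))"
proof -
  let ?XY = "\<lambda>\<omega>. (X \<omega>, Y \<omega>)"
  have "log b (pmf (map_pmf ?XY M) (?XY \<omega>)) \<le> log b (pmf (map_pmf Y M) (Y \<omega>))"
    if "\<omega> \<in> set_pmf M" for \<omega>
  proof -
    have "measure_pmf.prob M (?XY -` {?XY \<omega>}) \<le> measure_pmf.prob M (Y -` {Y \<omega>})"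
      by (rule measure_pmf.finite_measure_mono) auto
    then show ?thesis
      using pmf_map_pos[OF that, of ?XY] b by (simp add: pmf_map)
  qed
  then show ?thesis
    by (simp add: rv_ent_eq_sum[OF fin] sum_mono mult_left_mono)
qed

lemma rv_ent_le_if_determined:
  assumes b: "1 < b" and fin: "finite (set_pmf M)"
    and det: "\<And>x y. x \<in> set_pmf M \<Longrightarrow> y \<in> set_pmf M \<Longrightarrow> X x = X y \<Longrightarrow> Y x = Y y"
  shows "rv_ent b M Y \<le> rv_ent b M X"
proof -
  have "rv_ent b M Y \<le> rv_ent b M (\<lambda>\<omega>. (X \<omega>, Y \<omega>))"
    by (rule rv_ent_le_pair[OF b fin])
  also have "\<dots> = rv_ent b M X"
    by (rule rv_ent_partition_cong) (auto dest: det)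
  finally show ?thesis .
qed

lemma rv_ent_le_log_card:
  assumes b: "1 < b" and fin: "finite (set_pmf M)" and A: "finite A" "X ` set_pmf M \<subseteq> A"
  shows "rv_ent b M X \<le> log b (card A)"
proof -
  let ?S = "set_pmf M"
  let ?n = "real (card (X ` ?S))"
  let ?P = "\<lambda>\<omega>. pmf (map_pmf X M) (X \<omega>)"
  have n: "0 < ?n"
    using fin set_pmf_not_empty[of M] by (simp add: card_gt_0_iff)
  have "(\<Sum>\<omega>\<in>?S. pmf M \<omega> * log b (1 / (?n * ?P \<omega>))) \<le> 0"
  proof (rule gibbs_inequality[OF b fin])
    have "(\<Sum>\<omega>\<in>?S. pmf M \<omega> * (1 / (?n * ?P \<omega>))) =
        (\<Sum>v\<in>X ` ?S. pmf (map_pmf X M) v * (1 / (?n * pmf (map_pmf X M) v)))"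
      by (rule sum_set_pmf_map[OF fin])
    also have "\<dots> = (\<Sum>v\<in>X ` ?S. 1 / ?n)"
      by (intro sum.cong) (auto dest: pmf_map_pos[of _ M X])
    also have "\<dots> = 1"
      using n by simp
    finally show "(\<Sum>\<omega>\<in>?S. pmf M \<omega> * (1 / (?n * ?P \<omega>))) \<le> 1"
      by simp
  qed (use fin n in \<open>auto simp: sum_pmf_eq_1 zero_less_mult_iff pmf_positive\<close>)
  also have "(\<Sum>\<omega>\<in>?S. pmf M \<omega> * log b (1 / (?n * ?P \<omega>))) =
      (\<Sum>\<omega>\<in>?S. - (pmf M \<omega> * log b (?P \<omega>)) - pmf M \<omega> * log b ?n)"
  proof (intro sum.cong refl)
    fix \<omega> assume "\<omega> \<in> ?S"
    then have "0 < ?P \<omega>"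
      by (rule pmf_map_pos)
    then show "pmf M \<omega> * log b (1 / (?n * ?P \<omega>)) = - (pmf M \<omega> * log b (?P \<omega>)) - pmf M \<omega> * log b ?n"
      using n b by (simp add: log_divide log_mult algebra_simps)
  qed
  also have "\<dots> = rv_ent b M X - log b ?n"
    by (simp add: sum_subtractf sum_negf rv_ent_eq_sum[OF fin] sum_distrib_right[symmetric]
        sum_pmf_eq_1[OF fin])
  finally have "rv_ent b M X \<le> log b ?n"
    by simp
  moreover have "log b ?n \<le> log b (card A)"
    using card_mono[OF A] n b by simp
  ultimately show ?thesis
    by linarith
qed

lemma sum_markov_product_le_one:
  fixes M :: "'o pmf" and X :: "'o \<Rightarrow> 'a" and Y :: "'o \<Rightarrow> 'b" and Z :: "'o \<Rightarrow> 'c"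
  assumes fin: "finite (set_pmf M)"
  defines "pXZ \<equiv> pmf (map_pmf (\<lambda>\<omega>. (X \<omega>, Z \<omega>)) M)"
    and "pYZ \<equiv> pmf (map_pmf (\<lambda>\<omega>. (Y \<omega>, Z \<omega>)) M)"
    and "pZ \<equiv> pmf (map_pmf Z M)"
  shows "(\<Sum>(x, y, z)\<in>(\<lambda>\<omega>. (X \<omega>, Y \<omega>, Z \<omega>)) ` set_pmf M. pXZ (x, z) * pYZ (y, z) / pZ z) \<le> 1"
proof -
  let ?S = "set_pmf M"
  have "(\<Sum>(x, y, z)\<in>(\<lambda>\<omega>. (X \<omega>, Y \<omega>, Z \<omega>)) ` ?S. pXZ (x, z) * pYZ (y, z) / pZ z)
      \<le> (\<Sum>(x, y, z)\<in>X ` ?S \<times> Y ` ?S \<times> Z ` ?S. pXZ (x, z) * pYZ (y, z) / pZ z)"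
    by (rule sum_mono2) (auto simp: fin pXZ_def pYZ_def pZ_def)
  also have "\<dots> = (\<Sum>z\<in>Z ` ?S. (\<Sum>x\<in>X ` ?S. pXZ (x, z)) * (\<Sum>y\<in>Y ` ?S. pYZ (y, z)) / pZ z)"
    by (simp add: sum.cartesian_product[symmetric] sum.swap[of _ "Z ` ?S"] sum.swap[of _ "Y ` ?S" "X ` ?S"]
        sum_distrib_left sum_distrib_right sum_divide_distrib)
  also have "\<dots> = (\<Sum>z\<in>Z ` ?S. pZ z)"
    using fin by (intro sum.cong) (auto simp: pXZ_def pYZ_def pZ_def sum_pmf_map_pair_marginal pmf_positive)
  also have "\<dots> = 1"
    using fin by (simp add: pZ_def sum_pmf_eq_1)
  finally show ?thesis .
qed

lemma rv_ent_submodular: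
  assumes b: "1 < b" and fin: "finite (set_pmf M)"
  shows "rv_ent b M (\<lambda>\<omega>. (X \<omega>, Y \<omega>, Z \<omega>)) + rv_ent b M Z
     \<le> rv_ent b M (\<lambda>\<omega>. (X \<omega>, Z \<omega>)) + rv_ent b M (\<lambda>\<omega>. (Y \<omega>, Z \<omega>))"
proof -
  let ?S = "set_pmf M"
  define V where "V = (\<lambda>\<omega>. (X \<omega>, Y \<omega>, Z \<omega>))"
  define pV where "pV = pmf (map_pmf V M)"
  define pXZ where "pXZ = pmf (map_pmf (\<lambda>\<omega>. (X \<omega>, Z \<omega>)) M)"
  define pYZ where "pYZ = pmf (map_pmf (\<lambda>\<omega>. (Y \<omega>, Z \<omega>)) M)"
  define pZ where "pZ = pmf (map_pmf Z M)"
  define r where "r = (\<lambda>(x, y, z). pXZ (x, z) * pYZ (y, z) / (pV (x, y, z) * pZ z))"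
  have pos: "0 < pV (V \<omega>)" "0 < pXZ (X \<omega>, Z \<omega>)" "0 < pYZ (Y \<omega>, Z \<omega>)" "0 < pZ (Z \<omega>)"
    if "\<omega> \<in> ?S" for \<omega>
    using that unfolding pV_def pXZ_def pYZ_def pZ_def by (auto simp: pmf_positive)
  have "(\<Sum>\<omega>\<in>?S. pmf M \<omega> * log b (r (V \<omega>))) \<le> 0"
  proof (rule gibbs_inequality[OF b fin])
    have "(\<Sum>\<omega>\<in>?S. pmf M \<omega> * r (V \<omega>)) = (\<Sum>v\<in>V ` ?S. pV v * r v)"
      unfolding pV_def by (rule sum_set_pmf_map[OF fin])
    also have "\<dots> = (\<Sum>(x, y, z)\<in>V ` ?S. pXZ (x, z) * pYZ (y, z) / pZ z)"
      by (intro sum.cong) (auto simp: r_def dest: pos(1))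
    also have "\<dots> \<le> 1"
      unfolding V_def pXZ_def pYZ_def pZ_def by (rule sum_markov_product_le_one[OF fin])
    finally show "(\<Sum>\<omega>\<in>?S. pmf M \<omega> * r (V \<omega>)) \<le> 1" .
  qed (use fin pos in \<open>auto simp: sum_pmf_eq_1 r_def V_def\<close>)
  also have "(\<Sum>\<omega>\<in>?S. pmf M \<omega> * log b (r (V \<omega>))) =
     (\<Sum>\<omega>\<in>?S. pmf M \<omega> * log b (pXZ (X \<omega>, Z \<omega>))) + (\<Sum>\<omega>\<in>?S. pmf M \<omega> * log b (pYZ (Y \<omega>, Z \<omega>)))
     - (\<Sum>\<omega>\<in>?S. pmf M \<omega> * log b (pV (V \<omega>))) - (\<Sum>\<omega>\<in>?S. pmf M \<omega> * log b (pZ (Z \<omega>)))"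
    unfolding sum.distrib[symmetric] sum_subtractf[symmetric]
  proof (intro sum.cong refl)
    fix \<omega> assume "\<omega> \<in> ?S"
    with pos[OF this] b show "pmf M \<omega> * log b (r (V \<omega>)) = pmf M \<omega> * log b (pXZ (X \<omega>, Z \<omega>))
        + pmf M \<omega> * log b (pYZ (Y \<omega>, Z \<omega>)) - pmf M \<omega> * log b (pV (V \<omega>)) - pmf M \<omega> * log b (pZ (Z \<omega>))"
      by (simp add: r_def V_def log_divide log_mult algebra_simps)
  qed
  finally show ?thesis
    using fin by (simp add: rv_ent_eq_sum V_def pV_def pXZ_def pYZ_def pZ_def)
qed

lemma rv_ent_submodular_gen:
  assumes b: "1 < b" and fin: "finite (set_pmf M)"
    and J: "\<And>x y. x \<in> set_pmf M \<Longrightarrow> y \<in> set_pmf M \<Longrightarrow> J x = J y \<longleftrightarrow> U x = U y \<and> V x = V y"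
    and CU: "\<And>x y. x \<in> set_pmf M \<Longrightarrow> y \<in> set_pmf M \<Longrightarrow> U x = U y \<Longrightarrow> C x = C y"
    and CV: "\<And>x y. x \<in> set_pmf M \<Longrightarrow> y \<in> set_pmf M \<Longrightarrow> V x = V y \<Longrightarrow> C x = C y"
  shows "rv_ent b M J + rv_ent b M C \<le> rv_ent b M U + rv_ent b M V"
proof -
  have "rv_ent b M (\<lambda>\<omega>. (U \<omega>, V \<omega>, C \<omega>)) + rv_ent b M C
     \<le> rv_ent b M (\<lambda>\<omega>. (U \<omega>, C \<omega>)) + rv_ent b M (\<lambda>\<omega>. (V \<omega>, C \<omega>))"
    by (rule rv_ent_submodular[OF b fin])
  moreover have "rv_ent b M (\<lambda>\<omega>. (U \<omega>, V \<omega>, C \<omega>)) = rv_ent b M J"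
    by (rule rv_ent_partition_cong) (auto simp: J dest: CU)
  moreover have "rv_ent b M (\<lambda>\<omega>. (U \<omega>, C \<omega>)) = rv_ent b M U"
    by (rule rv_ent_partition_cong) (auto dest: CU)
  moreover have "rv_ent b M (\<lambda>\<omega>. (V \<omega>, C \<omega>)) = rv_ent b M V"
    by (rule rv_ent_partition_cong) (auto dest: CV)
  ultimately show ?thesis by simp
qed

lemma rv_ent_subadditive_gen:
  assumes b: "1 < b" and fin: "finite (set_pmf M)"
    and J: "\<And>x y. x \<in> set_pmf M \<Longrightarrow> y \<in> set_pmf M \<Longrightarrow> J x = J y \<longleftrightarrow> U x = U y \<and> V x = V y"
  shows "rv_ent b M J \<le> rv_ent b M U + rv_ent b M V"
  using rv_ent_submodular_gen[OF b fin J, where C = "\<lambda>_. ()"] by (simp add: rv_ent_const)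

lemma rv_ent_subadditive:
  assumes b: "1 < b" and fin: "finite (set_pmf M)"
  shows "rv_ent b M (\<lambda>\<omega>. (X \<omega>, Y \<omega>)) \<le> rv_ent b M X + rv_ent b M Y"
  by (rule rv_ent_subadditive_gen[OF b fin]) simp

lemma pmf_ent_pair_pmf:
  assumes fp: "finite (set_pmf p)" and fq: "finite (set_pmf q)"
  shows "pmf_ent b (pair_pmf p q) = pmf_ent b p + pmf_ent b q"
proof -
  have "(\<Sum>x\<in>set_pmf (pair_pmf p q). pmf (pair_pmf p q) x * log b (pmf (pair_pmf p q) x))
      = (\<Sum>a\<in>set_pmf p. \<Sum>c\<in>set_pmf q. pmf p a * pmf q c * log b (pmf p a * pmf q c))"
    unfolding set_pair_pmf sum.cartesian_product by (intro sum.cong) (auto simp: pmf_pair)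
  also have "\<dots> = (\<Sum>a\<in>set_pmf p. \<Sum>c\<in>set_pmf q.
      pmf q c * (pmf p a * log b (pmf p a)) + pmf p a * (pmf q c * log b (pmf q c)))"
    by (intro sum.cong) (auto simp: pmf_positive log_mult algebra_simps)
  also have "\<dots> = (\<Sum>a\<in>set_pmf p. pmf p a * log b (pmf p a)) + (\<Sum>c\<in>set_pmf q. pmf q c * log b (pmf q c))"
    using fp fq by (simp add: sum.distrib sum_distrib_right[symmetric] sum_distrib_left[symmetric] sum_pmf_eq_1)
  finally show ?thesis
    unfolding pmf_ent_def by simp
qed

lemma pmf_ent_pmf_of_set:
  assumes "finite A" "A \<noteq> {}"
  shows "pmf_ent b (pmf_of_set A) = log b (card A)"
proof -
  have c: "0 < card A"
    using assms by (simp add: card_gt_0_iff)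
  have "pmf_ent b (pmf_of_set A) = - (\<Sum>x\<in>A. 1 / card A * log b (1 / card A))"
    unfolding pmf_ent_def using assms by (intro arg_cong[where f=uminus] sum.cong) auto
  also have "\<dots> = log b (card A)"
    using c by (simp add: log_divide)
  finally show ?thesis .
qed

definition cond_mut_info :: "real \<Rightarrow> 'o pmf \<Rightarrow> ('o \<Rightarrow> 'a) \<Rightarrow> ('o \<Rightarrow> 'b) \<Rightarrow> ('o \<Rightarrow> 'c) \<Rightarrow> real" where
  "cond_mut_info b M X Y Z = rv_ent b M (\<lambda>\<omega>. (X \<omega>, Z \<omega>)) + rv_ent b M (\<lambda>\<omega>. (Y \<omega>, Z \<omega>))
     - rv_ent b M (\<lambda>\<omega>. (X \<omega>, Y \<omega>, Z \<omega>)) - rv_ent b M Z"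

lemma cond_mut_info_nonneg:
  assumes "1 < b" "finite (set_pmf M)"
  shows "0 \<le> cond_mut_info b M X Y Z"
  using rv_ent_submodular[OF assms, of X Y Z] unfolding cond_mut_info_def by linarith

lemma mut_info_nonneg:
  assumes "1 < b" "finite (set_pmf M)"
  shows "0 \<le> mut_info b M X Y"
  using rv_ent_subadditive[OF assms, of X Y] unfolding mut_info_def by linarith

lemma mut_info_le_if_determined:
  assumes b: "1 < b" and fin: "finite (set_pmf M)"
    and det: "\<And>x y. x \<in> set_pmf M \<Longrightarrow> y \<in> set_pmf M \<Longrightarrow> X' x = X' y \<Longrightarrow> X x = X y"
  shows "mut_info b M X Y \<le> mut_info b M X' Y"
proof -
  have "rv_ent b M (\<lambda>\<omega>. (X' \<omega>, Y \<omega>)) + rv_ent b M X \<le> rv_ent b M X' + rv_ent b M (\<lambda>\<omega>. (X \<omega>, Y \<omega>))"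
    by (rule rv_ent_submodular_gen[OF b fin]) (auto dest: det)
  then show ?thesis
    by (simp add: mut_info_def)
qed

lemma cond_mut_info_le_mut_info:
  assumes b: "1 < b" and fin: "finite (set_pmf M)"
    and det: "\<And>x y. x \<in> set_pmf M \<Longrightarrow> y \<in> set_pmf M \<Longrightarrow> Y x = Y y \<Longrightarrow> X x = X y \<and> Z x = Z y"
  shows "cond_mut_info b M X W Z \<le> mut_info b M W Y"
proof -
  have "rv_ent b M (\<lambda>\<omega>. (W \<omega>, Z \<omega>)) \<le> rv_ent b M W + rv_ent b M Z"
    by (rule rv_ent_subadditive[OF b fin])
  moreover have "rv_ent b M (\<lambda>\<omega>. (W \<omega>, Y \<omega>)) + rv_ent b M (\<lambda>\<omega>. (X \<omega>, Z \<omega>))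
      \<le> rv_ent b M Y + rv_ent b M (\<lambda>\<omega>. (X \<omega>, W \<omega>, Z \<omega>))"
    by (rule rv_ent_submodular_gen[OF b fin]) (auto dest: det)
  ultimately show ?thesis
    by (simp add: cond_mut_info_def mut_info_def)
qed

lemma two_cases: "(x::2) = 0 \<or> x = 1"
proof (cases x)
  case (of_int z)
  then have "z = 0 \<or> z = 1" by auto
  then show ?thesis using of_int by auto
qed

lemma three_cases: "(x::3) = 0 \<or> x = 1 \<or> x = 2"
proof (cases x)
  case (of_int z)
  then have "z = 0 \<or> z = 1 \<or> z = 2" by auto
  then show ?thesis using of_int by auto
qed

lemma fun_eq_iff_2:
  fixes f g :: "2 \<Rightarrow> 'a"
  assumes "n \<noteq> m"
  shows "f = g \<longleftrightarrow> f n = g n \<and> f m = g m"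
proof -
  have "x = n \<or> x = m" for x :: 2
    using assms two_cases[of x] two_cases[of n] two_cases[of m] by auto
  then show ?thesis
    unfolding fun_eq_iff by metis
qed

lemma fun_eq_iff_3:
  fixes f g :: "3 \<Rightarrow> 'a"
  shows "f = g \<longleftrightarrow> f 0 = g 0 \<and> f 1 = g 1 \<and> f 2 = g 2"
  using three_cases by (metis ext)

lemma qbase_gt_1: "1 < qbase TYPE('f::{finite,zero_neq_one})"
proof -
  have "card {0::'f, 1} \<le> CARD('f)"
    by (rule card_mono) simp_all
  then show ?thesis
    by (simp add: qbase_def)
qed

lemma rv_ent_le_one:
  assumes "finite (set_pmf M)"
  shows "rv_ent (qbase TYPE('f::{finite,zero_neq_one})) M (X :: 'o \<Rightarrow> 'f) \<le> 1"
  using rv_ent_le_log_card[OF qbase_gt_1[where 'f='f] assms, of UNIV X] qbase_gt_1[where 'f='f]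
  by (simp add: qbase_def)

lemma rv_ent_uniform_fun:
  "rv_ent (qbase TYPE('f::{finite,zero_neq_one})) (pmf_of_set UNIV) (\<lambda>w :: 'n::finite \<Rightarrow> 'f. w) = CARD('n)"
  using qbase_gt_1[where 'f='f]
  by (simp add: rv_ent_def pmf_ent_pmf_of_set card_fun qbase_def log_nat_power)

lemma rv_ent_uniform_coord:
  "rv_ent (qbase TYPE('f::{finite,zero_neq_one})) (pmf_of_set UNIV) (\<lambda>w :: 3 \<Rightarrow> 'f. w j) = 1"
proof -
  let ?H = "rv_ent (qbase TYPE('f)) (pmf_of_set (UNIV :: (3 \<Rightarrow> 'f) set))"
  note b = qbase_gt_1[where 'f='f]
  have fin: "finite (set_pmf (pmf_of_set (UNIV :: (3 \<Rightarrow> 'f) set)))"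
    by simp
  have le1: "?H (\<lambda>w. w i) \<le> 1" for i
    by (rule rv_ent_le_one[OF fin])
  have "3 = ?H (\<lambda>w. w)"
    using rv_ent_uniform_fun[where 'f='f and 'n=3] by simp
  also have "\<dots> \<le> ?H (\<lambda>w. w 0) + ?H (\<lambda>w. (w 1, w 2))"
    by (rule rv_ent_subadditive_gen[OF b fin]) (auto simp: fun_eq_iff_3)
  also have "?H (\<lambda>w. (w 1, w 2)) \<le> ?H (\<lambda>w. w 1) + ?H (\<lambda>w. w 2)"
    by (rule rv_ent_subadditive[OF b fin])
  finally have "3 \<le> ?H (\<lambda>w. w 0) + (?H (\<lambda>w. w 1) + ?H (\<lambda>w. w 2))"
    by simp
  then show ?thesis
    using le1[of 0] le1[of 1] le1[of 2] three_cases[of j] by auto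
qed

lemma sample_rv_simps:
  "msg_rv k \<omega> = fst \<omega> k"
  "user_rv \<omega> = fst (snd \<omega>)"
  "query_rv Q n k \<omega> = Q n k (fst (snd \<omega>))"
  "ans_rv Q Ans n k \<omega> = Ans n (Q n k (fst (snd \<omega>))) (fst \<omega>) (snd (snd \<omega>))"
  "others_rv k \<omega> = (\<lambda>j. if j = k then None else Some (fst \<omega> j))"
  by (simp_all add: msg_rv_def user_rv_def query_rv_def ans_rv_def others_rv_def split_beta)

lemma msg_determined_by_others:
  "k \<noteq> k' \<Longrightarrow> others_rv k' x = others_rv k' y \<Longrightarrow> msg_rv k x = msg_rv k y"
  by (drule fun_cong[of _ _ k]) (simp add: sample_rv_simps)

lemma msgs_eq_iff_others_msg:
  "fst x = fst y \<longleftrightarrow> others_rv k x = others_rv k y \<and> msg_rv k x = msg_rv k y"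
  by (auto simp: sample_rv_simps fun_eq_iff split: if_splits)

lemma set_pmf_joint: "set_pmf (joint pF pR :: 'f::finite sample pmf) = UNIV \<times> set_pmf pF \<times> set_pmf pR"
  by (simp add: joint_def set_pair_pmf)

lemma rv_ent_id: "rv_ent b p (\<lambda>x. x) = pmf_ent b p"
  by (simp add: rv_ent_def)

lemma rv_ent_joint:
  assumes "finite (set_pmf pF)" "finite (set_pmf pR)"
  shows "rv_ent b (joint pF pR :: 'f::finite sample pmf) (\<lambda>\<omega>. (X (fst \<omega>), Y (user_rv \<omega>), Z (snd (snd \<omega>))))
    = rv_ent b (pmf_of_set UNIV) X + rv_ent b pF Y + rv_ent b pR Z"
proof -
  have "(\<lambda>\<omega>. (X (fst \<omega>), Y (user_rv \<omega>), Z (snd (snd \<omega>)))) = (\<lambda>(a, b). (X a, (\<lambda>(c, d). (Y c, Z d)) b))"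
    by (auto simp: user_rv_def)
  then have "map_pmf (\<lambda>\<omega>. (X (fst \<omega>), Y (user_rv \<omega>), Z (snd (snd \<omega>)))) (joint pF pR :: 'f sample pmf)
     = pair_pmf (map_pmf X (pmf_of_set UNIV)) (pair_pmf (map_pmf Y pF) (map_pmf Z pR))"
    unfolding joint_def by (simp add: map_pair)
  then show ?thesis
    using assms by (simp add: rv_ent_def pmf_ent_pair_pmf set_pair_pmf)
qed


lemma rv_ent_joint_user:
  assumes "finite (set_pmf pF)" "finite (set_pmf pR)"
  shows "rv_ent b (joint pF pR :: 'f::finite sample pmf) user_rv = rv_ent b pF (\<lambda>f. f)"
proof -
  have "rv_ent b (joint pF pR :: 'f sample pmf) user_rv
      = rv_ent b (joint pF pR :: 'f sample pmf) (\<lambda>\<omega>. ((), user_rv \<omega>, ()))"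
    by (rule rv_ent_partition_cong) auto
  then show ?thesis
    using rv_ent_joint[OF assms, of b "\<lambda>_. ()" "\<lambda>f. f" "\<lambda>_. ()"] by (simp add: rv_ent_const)
qed

locale spir =
  fixes pF pR :: "nat pmf" and Q :: "2 \<Rightarrow> 3 \<Rightarrow> nat \<Rightarrow> nat"
    and Ans :: "2 \<Rightarrow> nat \<Rightarrow> (3 \<Rightarrow> 'f::{finite,field}) \<Rightarrow> nat \<Rightarrow> nat"
  assumes scheme: "spir_scheme pF pR Q Ans"
begin

abbreviation M :: "'f sample pmf" where "M \<equiv> joint pF pR"
abbreviation H where "H \<equiv> rv_ent (qbase TYPE('f)) M"
abbreviation I where "I \<equiv> cond_mut_info (qbase TYPE('f)) M"
abbreviation ans where "ans \<equiv> ans_rv Q Ans"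

lemma finite_user: "finite (set_pmf pF)" and finite_key: "finite (set_pmf pR)"
  using scheme by (simp_all add: spir_scheme_def)

lemma finite_M: "finite (set_pmf M)"
  using finite_user finite_key by (simp add: set_pmf_joint)

lemmas base_gt_1 = qbase_gt_1[where 'f='f]

lemma reliable: "H (\<lambda>\<omega>. (msg_rv k \<omega>, user_rv \<omega>, \<lambda>n. ans n k \<omega>)) = H (\<lambda>\<omega>. (user_rv \<omega>, \<lambda>n. ans n k \<omega>))"
  using scheme by (simp add: spir_scheme_def cond_ent_def)

lemma user_private:
  "map_pmf (\<lambda>\<omega>. (query_rv Q n k \<omega>, ans n k \<omega>, fst \<omega>, snd (snd \<omega>))) M
     = map_pmf (\<lambda>\<omega>. (query_rv Q n k' \<omega>, ans n k' \<omega>, fst \<omega>, snd (snd \<omega>))) M"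
  using scheme unfolding spir_scheme_def by blast

lemma database_private: "mut_info (qbase TYPE('f)) M (others_rv k) (\<lambda>\<omega>. (user_rv \<omega>, \<lambda>n. ans n k \<omega>)) = 0"
  using scheme by (simp add: spir_scheme_def)

lemma ent_indep:
  "H (\<lambda>\<omega>. (X (fst \<omega>), Y (user_rv \<omega>), Z (snd (snd \<omega>))))
     = rv_ent (qbase TYPE('f)) (pmf_of_set UNIV) X + rv_ent (qbase TYPE('f)) pF Y + rv_ent (qbase TYPE('f)) pR Z"
  by (rule rv_ent_joint[OF finite_user finite_key])

lemma ent_user: "H user_rv = rv_ent (qbase TYPE('f)) pF (\<lambda>f. f)"
  by (rule rv_ent_joint_user[OF finite_user finite_key])

lemma ent_msg_user: "H (\<lambda>\<omega>. (msg_rv k \<omega>, user_rv \<omega>)) = 1 + H user_rv"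
proof -
  have "H (\<lambda>\<omega>. (msg_rv k \<omega>, user_rv \<omega>)) = H (\<lambda>\<omega>. (fst \<omega> k, user_rv \<omega>, ()))"
    by (rule rv_ent_partition_cong) (auto simp: sample_rv_simps)
  then show ?thesis
    using ent_indep[of "\<lambda>w. w k" "\<lambda>f. f" "\<lambda>_. ()"]
    by (simp add: ent_user rv_ent_const rv_ent_uniform_coord)
qed

lemma ent_msgs_user: "H (\<lambda>\<omega>. (fst \<omega>, user_rv \<omega>)) = 3 + H user_rv"
proof -
  have "H (\<lambda>\<omega>. (fst \<omega>, user_rv \<omega>)) = H (\<lambda>\<omega>. (fst \<omega>, user_rv \<omega>, ()))"
    by (rule rv_ent_partition_cong) auto
  then show ?thesis
    using ent_indep[of "\<lambda>w. w" "\<lambda>f. f" "\<lambda>_. ()"]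
    by (simp add: ent_user rv_ent_const rv_ent_uniform_fun)
qed

lemma ent_msgs_user_key: "H (\<lambda>\<omega>. (fst \<omega>, user_rv \<omega>, snd (snd \<omega>))) = 3 + H user_rv + cr_amount TYPE('f) pR"
  using ent_indep[of "\<lambda>w. w" "\<lambda>f. f" "\<lambda>r. r"] rv_ent_uniform_fun[where 'f='f and 'n=3]
  by (simp add: ent_user rv_ent_id cr_amount_def)

lemma ent_user_msgs_key_indep:
  "H (\<lambda>\<omega>. (user_rv \<omega>, fst \<omega>, snd (snd \<omega>))) = H user_rv + H (\<lambda>\<omega>. (fst \<omega>, snd (snd \<omega>)))"
proof -
  have "H (\<lambda>\<omega>. (user_rv \<omega>, fst \<omega>, snd (snd \<omega>))) = H (\<lambda>\<omega>. (fst \<omega>, user_rv \<omega>, snd (snd \<omega>)))"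
    by (rule rv_ent_partition_cong) auto
  moreover have "H (\<lambda>\<omega>. (fst \<omega>, snd (snd \<omega>))) = H (\<lambda>\<omega>. (fst \<omega>, (), snd (snd \<omega>)))"
    by (rule rv_ent_partition_cong) auto
  ultimately show ?thesis
    using ent_indep[of "\<lambda>w. w" "\<lambda>f. f" "\<lambda>r. r"] ent_indep[of "\<lambda>w. w" "\<lambda>_. ()" "\<lambda>r. r"]
    by (simp add: ent_user rv_ent_const)
qed

text \<open>The query is a function of the user's randomness, and the messages and the common randomness,
  which together with the query determine the answer, are independent of it.\<close>

lemma cond_mut_info_user_le_query:
  "I (ans n k) (msg_rv k) user_rv \<le> I (ans n k) (msg_rv k) (query_rv Q n k)"
proof -
  let ?F = user_rv and ?W = "msg_rv k" and ?T = "query_rv Q n k" and ?A = "ans n k"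
    and ?WR = "\<lambda>\<omega>::'f sample. (fst \<omega>, snd (snd \<omega>))"
  note submod = rv_ent_submodular_gen[OF base_gt_1 finite_M]
  have "H (\<lambda>\<omega>. (?A \<omega>, ?F \<omega>)) + H ?T \<le> H (\<lambda>\<omega>. (?A \<omega>, ?T \<omega>)) + H ?F"
    by (rule submod) (auto simp: sample_rv_simps)
  moreover have "H (\<lambda>\<omega>. (?W \<omega>, ?F \<omega>)) + H ?T \<le> H (\<lambda>\<omega>. (?W \<omega>, ?T \<omega>)) + H ?F"
    by (rule submod) (auto simp: sample_rv_simps)
  moreover have "H (\<lambda>\<omega>. (?F \<omega>, ?WR \<omega>)) + H (\<lambda>\<omega>. (?A \<omega>, ?W \<omega>, ?T \<omega>))
      \<le> H (\<lambda>\<omega>. (?A \<omega>, ?W \<omega>, ?F \<omega>)) + H (\<lambda>\<omega>. (?WR \<omega>, ?T \<omega>))"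
    by (rule submod) (auto simp: sample_rv_simps)
  moreover have "H (\<lambda>\<omega>. (?WR \<omega>, ?T \<omega>)) \<le> H ?WR + H ?T"
    by (rule rv_ent_subadditive[OF base_gt_1 finite_M])
  moreover have "H (\<lambda>\<omega>. (?F \<omega>, ?WR \<omega>)) = H ?F + H ?WR"
    using ent_user_msgs_key_indep by simp
  ultimately show ?thesis
    unfolding cond_mut_info_def by linarith
qed

lemma cond_mut_info_query_swap:
  "I (ans n k) (msg_rv j) (query_rv Q n k) = I (ans n k') (msg_rv j) (query_rv Q n k')"
proof -
  have "H (\<lambda>\<omega>. g (query_rv Q n k \<omega>, ans n k \<omega>, fst \<omega>, snd (snd \<omega>)))
      = H (\<lambda>\<omega>. g (query_rv Q n k' \<omega>, ans n k' \<omega>, fst \<omega>, snd (snd \<omega>)))" for g :: "_ \<Rightarrow> 'a"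
    by (rule rv_ent_comp_cong_distr[OF user_private])
  from this[of "\<lambda>(q, a, w, r). (a, q)"] this[of "\<lambda>(q, a, w, r). (w j, q)"]
    this[of "\<lambda>(q, a, w, r). (a, w j, q)"] this[of "\<lambda>(q, a, w, r). q"]
  show ?thesis
    by (simp add: cond_mut_info_def sample_rv_simps(1))
qed

lemma answer_msg_cond_indep: "I (ans n k) (msg_rv k) user_rv = 0"
proof -
  obtain k' :: 3 where k': "k \<noteq> k'"
    by (metis zero_neq_one)
  have "I (ans n k) (msg_rv k) user_rv \<le> I (ans n k) (msg_rv k) (query_rv Q n k)"
    by (rule cond_mut_info_user_le_query)
  also have "\<dots> = I (ans n k') (msg_rv k) (query_rv Q n k')"
    by (rule cond_mut_info_query_swap)
  also have "\<dots> \<le> mut_info (qbase TYPE('f)) M (msg_rv k) (\<lambda>\<omega>. (user_rv \<omega>, \<lambda>m. ans m k' \<omega>))"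
    by (rule cond_mut_info_le_mut_info[OF base_gt_1 finite_M]) (auto simp: sample_rv_simps dest: fun_cong[where x = n])
  also have "\<dots> \<le> mut_info (qbase TYPE('f)) M (others_rv k') (\<lambda>\<omega>. (user_rv \<omega>, \<lambda>m. ans m k' \<omega>))"
    by (rule mut_info_le_if_determined[OF base_gt_1 finite_M]) (rule msg_determined_by_others[OF k'])
  also have "\<dots> = 0"
    by (rule database_private)
  finally show ?thesis
    using cond_mut_info_nonneg[OF base_gt_1 finite_M] by (rule order_antisym)
qed

text \<open>By reliability and independence, \<open>1 = H(W\<^sub>k|F) = I(W\<^sub>k; A\<^sub>n, A\<^sub>m | F)\<close>, and the
  part \<open>I(W\<^sub>k; A\<^sub>n | F)\<close> vanishes.\<close>

lemma cond_ent_other_answer_ge_one: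
  assumes "n \<noteq> m"
  shows "1 \<le> cond_ent (qbase TYPE('f)) M (ans m k) (\<lambda>\<omega>. (user_rv \<omega>, ans n k \<omega>))"
proof -
  let ?An = "ans n k" and ?Am = "ans m k" and ?Y = "\<lambda>\<omega>. (user_rv \<omega>, \<lambda>n. ans n k \<omega>)"
  have "H (\<lambda>\<omega>. (?Am \<omega>, user_rv \<omega>, ?An \<omega>)) = H ?Y"
    by (rule rv_ent_partition_cong) (auto simp: fun_eq_iff_2[OF assms])
  also have "\<dots> = H (\<lambda>\<omega>. (msg_rv k \<omega>, ?Y \<omega>))"
    by (rule reliable[symmetric])
  also have "H (\<lambda>\<omega>. (?An \<omega>, msg_rv k \<omega>, user_rv \<omega>)) \<le> \<dots>"
    by (rule rv_ent_le_if_determined[OF base_gt_1 finite_M]) (auto dest: fun_cong[where x = n])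
  moreover have "H (\<lambda>\<omega>. (?An \<omega>, user_rv \<omega>)) = H (\<lambda>\<omega>. (user_rv \<omega>, ?An \<omega>))"
    by (rule rv_ent_partition_cong) auto
  ultimately show ?thesis
    using answer_msg_cond_indep[of n k] ent_msg_user[of k]
    unfolding cond_ent_def cond_mut_info_def by linarith
qed

lemma answer_ent_ge_one: "1 \<le> H (ans m k)"
proof -
  obtain n :: 2 where n: "n \<noteq> m"
    by (metis zero_neq_one)
  have "H (\<lambda>\<omega>. (ans m k \<omega>, user_rv \<omega>, ans n k \<omega>)) \<le> H (ans m k) + H (\<lambda>\<omega>. (user_rv \<omega>, ans n k \<omega>))"
    by (rule rv_ent_subadditive[OF base_gt_1 finite_M])
  then show ?thesis
    using cond_ent_other_answer_ge_one[OF n, of k] unfolding cond_ent_def by linarith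
qed

lemma cond_ent_answers_ge_two: "2 \<le> cond_ent (qbase TYPE('f)) M (\<lambda>\<omega>. \<lambda>n. ans n k \<omega>) user_rv"
proof -
  let ?X = "ans 0 k" and ?Y = "ans 1 k" and ?A = "\<lambda>\<omega>. \<lambda>n. ans n k \<omega>"
  have "H (\<lambda>\<omega>. (?A \<omega>, user_rv \<omega>)) + H user_rv
      \<le> H (\<lambda>\<omega>. (user_rv \<omega>, ?X \<omega>)) + H (\<lambda>\<omega>. (user_rv \<omega>, ?Y \<omega>))"
    by (rule rv_ent_submodular_gen[OF base_gt_1 finite_M]) (auto simp: fun_eq_iff_2[of 0 1])
  moreover have "H (\<lambda>\<omega>. (?Y \<omega>, user_rv \<omega>, ?X \<omega>)) = H (\<lambda>\<omega>. (?A \<omega>, user_rv \<omega>))"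
    by (rule rv_ent_partition_cong) (auto simp: fun_eq_iff_2[of 0 1])
  moreover have "H (\<lambda>\<omega>. (?X \<omega>, user_rv \<omega>, ?Y \<omega>)) = H (\<lambda>\<omega>. (?A \<omega>, user_rv \<omega>))"
    by (rule rv_ent_partition_cong) (auto simp: fun_eq_iff_2[of 0 1])
  ultimately show ?thesis
    using cond_ent_other_answer_ge_one[of 0 1 k] cond_ent_other_answer_ge_one[of 1 0 k]
    unfolding cond_ent_def by simp
qed

text \<open>\<open>(W, F, R)\<close> determines \<open>(W\<^sub>-\<^sub>0, F, A)\<close>, whose entropy is
  \<open>H(W\<^sub>-\<^sub>0) + H(F, A) \<ge> 2 + (H(F) + 2)\<close> by database privacy.\<close>

lemma cr_amount_ge_one: "1 \<le> cr_amount TYPE('f) pR"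
proof -
  let ?Y = "\<lambda>\<omega>. (user_rv \<omega>, \<lambda>n. ans n 0 \<omega>)"
  have "H (\<lambda>\<omega>. (others_rv 0 \<omega>, ?Y \<omega>)) \<le> H (\<lambda>\<omega>. (fst \<omega>, user_rv \<omega>, snd (snd \<omega>)))"
    by (rule rv_ent_le_if_determined[OF base_gt_1 finite_M]) (auto simp: sample_rv_simps)
  moreover have "H (\<lambda>\<omega>. (fst \<omega>, user_rv \<omega>)) \<le> H (others_rv 0) + H (\<lambda>\<omega>. (msg_rv 0 \<omega>, user_rv \<omega>))"
    by (rule rv_ent_subadditive_gen[OF base_gt_1 finite_M]) (auto simp: msgs_eq_iff_others_msg[of _ _ 0])
  moreover have "H ?Y = H (\<lambda>\<omega>. (\<lambda>n. ans n 0 \<omega>, user_rv \<omega>))"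
    by (rule rv_ent_partition_cong) auto
  ultimately show ?thesis
    using database_private[of 0] cond_ent_answers_ge_two[of 0] ent_msgs_user_key ent_msgs_user ent_msg_user[of 0]
    unfolding mut_info_def cond_ent_def by linarith
qed

lemma download_ge_two: "2 \<le> download pF pR Q Ans"
proof -
  have "1 \<le> log (qbase TYPE('f)) (card (\<Union>k. ans n k ` set_pmf M))" for n
  proof -
    have "H (ans n 0) \<le> log (qbase TYPE('f)) (card (\<Union>k. ans n k ` set_pmf M))"
      by (rule rv_ent_le_log_card[OF base_gt_1 finite_M]) (use finite_M in auto)
    then show ?thesis
      using answer_ent_ge_one[of n 0] by linarith
  qed
  then have "(\<Sum>n\<in>(UNIV :: 2 set). 1) \<le> download pF pR Q Ans"
    unfolding download_def by (intro sum_mono)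
  then show ?thesis
    by simp
qed

end

lemma rv_ent_others_le_two:
  assumes fin: "finite (set_pmf M)"
  shows "rv_ent (qbase TYPE('f::{finite,field})) M (others_rv k :: 'f sample \<Rightarrow> _) \<le> 2"
proof -
  let ?H = "rv_ent (qbase TYPE('f)) M"
  have ij: "l = k \<or> l = k + 1 \<or> l = k + 2" for l :: 3
    using three_cases[of "l - k"] by (auto simp: diff_eq_eq add.commute)
  have "?H (others_rv k) \<le> ?H (\<lambda>\<omega>. (fst \<omega> (k + 1), fst \<omega> (k + 2)))"
  proof (rule rv_ent_le_if_determined[OF qbase_gt_1 fin])
    fix x y :: "'f sample"
    assume eq: "(fst x (k + 1), fst x (k + 2)) = (fst y (k + 1), fst y (k + 2))"
    show "others_rv k x = others_rv k y"
    proof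
      fix l
      show "others_rv k x l = others_rv k y l"
        using ij[of l] eq by (auto simp: sample_rv_simps)
    qed
  qed
  also have "\<dots> \<le> ?H (\<lambda>\<omega>. fst \<omega> (k + 1)) + ?H (\<lambda>\<omega>. fst \<omega> (k + 2))"
    by (rule rv_ent_subadditive[OF qbase_gt_1 fin])
  finally show ?thesis
    using rv_ent_le_one[OF fin, of "\<lambda>\<omega>. fst \<omega> (k + 1)"] rv_ent_le_one[OF fin, of "\<lambda>\<omega>. fst \<omega> (k + 2)"]
    by simp
qed

lemma map_pmf_joint_user_invariant:
  assumes "map_pmf h pF = pF"
  shows "map_pmf (\<lambda>\<omega>. (h (user_rv \<omega>), fst \<omega>, snd (snd \<omega>))) (joint pF pR :: 'f::finite sample pmf)
       = map_pmf (\<lambda>\<omega>. (user_rv \<omega>, fst \<omega>, snd (snd \<omega>))) (joint pF pR)"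
proof -
  have "(\<lambda>\<omega>::'f sample. (h (user_rv \<omega>), fst \<omega>, snd (snd \<omega>)))
      = (\<lambda>\<omega>. (user_rv \<omega>, fst \<omega>, snd (snd \<omega>))) \<circ> (\<lambda>(w, fr). (w, (\<lambda>(f, r). (h f, r)) fr))"
    by (auto simp: user_rv_def)
  moreover have "map_pmf (\<lambda>(f, r). (h f, r)) (pair_pmf pF pR) = pair_pmf pF pR"
    using map_pair[of h "\<lambda>r. r" pF pR] assms by simp
  then have "map_pmf (\<lambda>(w, fr). (w, (\<lambda>(f, r). (h f, r)) fr)) (joint pF pR :: 'f sample pmf) = joint pF pR"
    using map_pair[of "\<lambda>w. w" "\<lambda>(f, r). (h f, r)" "pmf_of_set UNIV" "pair_pmf pF pR"]
    by (simp add: joint_def)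
  ultimately show ?thesis
    by (simp add: map_pmf_compose)
qed

definition vec3 :: "'a \<Rightarrow> 'a \<Rightarrow> 'a \<Rightarrow> 3 \<Rightarrow> 'a" where
  "vec3 a b c = (\<lambda>j. if j = 0 then a else if j = 1 then b else c)"

definition even_query_vec :: "nat \<Rightarrow> 3 \<Rightarrow> 'f::field" where
  "even_query_vec f = (if f = 0 then vec3 0 0 0 else if f = 1 then vec3 1 1 0
     else if f = 2 then vec3 1 0 1 else vec3 0 1 1)"

definition odd_query_vec :: "nat \<Rightarrow> 3 \<Rightarrow> 'f::field" where
  "odd_query_vec g = (if g = 0 then vec3 1 1 1 else if g = 1 then vec3 0 0 1
     else if g = 2 then vec3 0 1 0 else vec3 1 0 0)"

definition dot3 :: "(3 \<Rightarrow> 'f::field) \<Rightarrow> (3 \<Rightarrow> 'f) \<Rightarrow> 'f" where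
  "dot3 v w = v 0 * w 0 + v 1 * w 1 + v 2 * w 2"

text \<open>The index of the odd-weight vector that differs from even_query_vec f exactly in coordinate k,
  by \<open>\<plusminus>1\<close>; the two answers then differ by \<open>\<plusminus>W\<^sub>k\<close>.\<close>

definition odd_query_index :: "3 \<Rightarrow> nat \<Rightarrow> nat" where
  "odd_query_index k f = (if k = 0 then 3 - f else if k = 1 then (if f < 2 then f + 2 else f - 2)
     else if even f then f + 1 else f - 1)"

definition scheme_query :: "2 \<Rightarrow> 3 \<Rightarrow> nat \<Rightarrow> nat" where
  "scheme_query n k f = (if n = 0 then f else odd_query_index k f)"

definition scheme_answer :: "2 \<Rightarrow> nat \<Rightarrow> (3 \<Rightarrow> 'f::{finite,field}) \<Rightarrow> nat \<Rightarrow> nat" where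
  "scheme_answer n q w r =
     to_nat (dot3 (if n = 0 then even_query_vec q else odd_query_vec q) w + from_nat r)"

definition scheme_user_pmf :: "nat pmf" where
  "scheme_user_pmf = pmf_of_set {0, 1, 2, 3}"

definition scheme_key_pmf :: "'f::finite itself \<Rightarrow> nat pmf" where
  "scheme_key_pmf _ = map_pmf to_nat (pmf_of_set (UNIV :: 'f set))"

lemma msg_from_query_vecs:
  fixes w :: "3 \<Rightarrow> 'f::field"
  assumes "f \<in> {0, 1, 2, 3}"
  shows "w k = (even_query_vec f k - odd_query_vec (odd_query_index k f) k)
    * (dot3 (even_query_vec f) w - dot3 (odd_query_vec (odd_query_index k f)) w)"
  using three_cases[of k] assms
  by (auto simp: even_query_vec_def odd_query_vec_def odd_query_index_def vec3_def dot3_def algebra_simps)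

lemma odd_query_index_bij: "bij_betw (odd_query_index k) {0, 1, 2, 3} {0, 1, 2, 3}"
  using three_cases[of k] by (auto simp: bij_betw_def inj_on_def odd_query_index_def)

lemma scheme_query_bij: "bij_betw (scheme_query n k) {0, 1, 2, 3} {0, 1, 2, 3}"
proof (cases "n = 0")
  case True
  then have "scheme_query n k = id"
    by (simp add: scheme_query_def fun_eq_iff)
  then show ?thesis
    by simp
next
  case False
  then have "scheme_query n k = odd_query_index k"
    by (simp add: scheme_query_def fun_eq_iff)
  with odd_query_index_bij show ?thesis
    by simp
qed

lemma scheme_answers_determine_msg:
  fixes w w' :: "3 \<Rightarrow> 'f::{finite,field}"
  assumes "f \<in> {0, 1, 2, 3}"
    and "\<And>n. scheme_answer n (scheme_query n k f) w r = scheme_answer n (scheme_query n k f) w' r'"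
  shows "w k = w' k"
proof -
  let ?u = "dot3 (even_query_vec f)" and ?t = "dot3 (odd_query_vec (odd_query_index k f))"
  have ans: "?u w + from_nat r = ?u w' + from_nat r'" "?t w + from_nat r = ?t w' + from_nat r'"
    using assms(2)[of 0] assms(2)[of 1] by (simp_all add: scheme_answer_def scheme_query_def)
  have "?u w - ?t w = (?u w + from_nat r) - (?t w + from_nat r)"
    by simp
  also have "\<dots> = (?u w' + from_nat r') - (?t w' + from_nat r')"
    by (simp only: ans)
  finally have "?u w - ?t w = ?u w' - ?t w'"
    by simp
  then show ?thesis
    using msg_from_query_vecs[OF assms(1), of w k] msg_from_query_vecs[OF assms(1), of w' k] by simp
qed

lemma scheme_answer_determines_key:
  fixes w :: "3 \<Rightarrow> 'f::{finite,field}"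
  assumes "r \<in> range (to_nat :: 'f \<Rightarrow> nat)"
  shows "r = to_nat ((from_nat (scheme_answer 0 q w r) :: 'f) - dot3 (even_query_vec q) w)"
  using assms by (auto simp: scheme_answer_def)

context
  fixes fld :: "'f::{finite,field} itself"
begin

abbreviation scheme_M :: "'f sample pmf" where
  "scheme_M \<equiv> joint scheme_user_pmf (scheme_key_pmf TYPE('f))"

abbreviation scheme_H where
  "scheme_H \<equiv> rv_ent (qbase TYPE('f)) scheme_M"

abbreviation scheme_ans where
  "scheme_ans \<equiv> ans_rv scheme_query (scheme_answer :: 2 \<Rightarrow> nat \<Rightarrow> (3 \<Rightarrow> 'f) \<Rightarrow> nat \<Rightarrow> nat)"

lemma set_pmf_scheme_M: "set_pmf scheme_M = UNIV \<times> {0, 1, 2, 3} \<times> range (to_nat :: 'f \<Rightarrow> nat)"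
  by (simp add: set_pmf_joint scheme_user_pmf_def scheme_key_pmf_def)

lemma finite_scheme_user: "finite (set_pmf scheme_user_pmf)"
  by (simp add: scheme_user_pmf_def)

lemma finite_scheme_key: "finite (set_pmf (scheme_key_pmf TYPE('f)))"
  by (simp add: scheme_key_pmf_def)

lemma finite_scheme_M: "finite (set_pmf scheme_M)"
  by (simp add: set_pmf_scheme_M)

lemma scheme_view_determines_msg:
  assumes "x \<in> set_pmf scheme_M" "y \<in> set_pmf scheme_M"
    and "user_rv x = user_rv y" "(\<lambda>n. scheme_ans n k x) = (\<lambda>n. scheme_ans n k y)"
  shows "msg_rv k x = msg_rv k y"
proof -
  have "user_rv x \<in> {0, 1, 2, 3}"
    using assms(1) by (auto simp: set_pmf_scheme_M sample_rv_simps)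
  moreover have "scheme_answer n (scheme_query n k (user_rv x)) (fst x) (snd (snd x))
      = scheme_answer n (scheme_query n k (user_rv x)) (fst y) (snd (snd y))" for n
    using fun_cong[OF assms(4), of n] assms(3) by (simp add: sample_rv_simps)
  ultimately have "fst x k = fst y k"
    by (rule scheme_answers_determine_msg)
  then show ?thesis
    by (simp add: sample_rv_simps)
qed

lemma scheme_reliable:
  "cond_ent (qbase TYPE('f)) scheme_M (msg_rv k) (\<lambda>\<omega>. (user_rv \<omega>, \<lambda>n. scheme_ans n k \<omega>)) = 0"
proof -
  have "scheme_H (\<lambda>\<omega>. (msg_rv k \<omega>, user_rv \<omega>, \<lambda>n. scheme_ans n k \<omega>))
      = scheme_H (\<lambda>\<omega>. (user_rv \<omega>, \<lambda>n. scheme_ans n k \<omega>))"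
    by (rule rv_ent_partition_cong) (auto dest: scheme_view_determines_msg[of _ _ k])
  then show ?thesis
    by (simp add: cond_ent_def)
qed

lemma scheme_query_view:
  "map_pmf (\<lambda>\<omega>. (query_rv scheme_query n k \<omega>, scheme_ans n k \<omega>, fst \<omega>, snd (snd \<omega>))) scheme_M
     = map_pmf (\<lambda>\<omega>. (user_rv \<omega>, scheme_answer n (user_rv \<omega>) (fst \<omega>) (snd (snd \<omega>)), fst \<omega>, snd (snd \<omega>))) scheme_M"
proof -
  let ?g = "\<lambda>(q, w, r). (q, scheme_answer n q w r, w, r)"
  have "map_pmf (scheme_query n k) scheme_user_pmf = scheme_user_pmf"
    using scheme_query_bij[of n k] by (simp add: scheme_user_pmf_def map_pmf_of_set_inj bij_betw_def)
  then have "map_pmf (\<lambda>\<omega>. (scheme_query n k (user_rv \<omega>), fst \<omega>, snd (snd \<omega>))) scheme_M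
      = map_pmf (\<lambda>\<omega>. (user_rv \<omega>, fst \<omega>, snd (snd \<omega>))) scheme_M"
    by (rule map_pmf_joint_user_invariant)
  then have "map_pmf ?g (map_pmf (\<lambda>\<omega>. (scheme_query n k (user_rv \<omega>), fst \<omega>, snd (snd \<omega>))) scheme_M)
      = map_pmf ?g (map_pmf (\<lambda>\<omega>. (user_rv \<omega>, fst \<omega>, snd (snd \<omega>))) scheme_M)"
    by simp
  then show ?thesis
    by (simp add: pmf.map_comp o_def sample_rv_simps)
qed

lemma scheme_view_determines_sample:
  assumes "x \<in> set_pmf scheme_M" "y \<in> set_pmf scheme_M"
    and "others_rv k x = others_rv k y" "user_rv x = user_rv y"
    and "(\<lambda>n. scheme_ans n k x) = (\<lambda>n. scheme_ans n k y)"
  shows "x = y"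
proof -
  obtain w f r w' r' where x: "x = (w, f, r)" and y: "y = (w', f, r')"
    using assms(4) by (cases x, cases y) (auto simp: sample_rv_simps)
  have f: "f \<in> {0, 1, 2, 3}" and r: "r \<in> range (to_nat :: 'f \<Rightarrow> nat)" and r': "r' \<in> range (to_nat :: 'f \<Rightarrow> nat)"
    using assms(1,2) by (auto simp: x y set_pmf_scheme_M)
  have "msg_rv k x = msg_rv k y"
    using scheme_view_determines_msg[OF assms(1,2,4,5)] .
  then have w: "w = w'"
    using assms(3) msgs_eq_iff_others_msg[of x y k] by (simp add: x y)
  have ans: "scheme_answer 0 (scheme_query 0 k f) w r = scheme_answer 0 (scheme_query 0 k f) w' r'"
    using fun_cong[OF assms(5), of 0] by (simp add: x y sample_rv_simps)
  have "r = r'"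
    using scheme_answer_determines_key[OF r, of "scheme_query 0 k f" w]
      scheme_answer_determines_key[OF r', of "scheme_query 0 k f" w] ans
    by (simp add: w scheme_query_def)
  then show ?thesis
    by (simp add: x y w)
qed

lemma scheme_key_ent: "pmf_ent (qbase TYPE('f)) (scheme_key_pmf TYPE('f)) = 1"
proof -
  have "pmf_ent (qbase TYPE('f)) (scheme_key_pmf TYPE('f)) = log (qbase TYPE('f)) CARD('f)"
    by (simp add: scheme_key_pmf_def pmf_ent_map_inj pmf_ent_pmf_of_set)
  also have "\<dots> = 1"
    using qbase_gt_1[where 'f='f] by (simp add: qbase_def)
  finally show ?thesis .
qed

lemma scheme_database_private:
  "mut_info (qbase TYPE('f)) scheme_M (others_rv k) (\<lambda>\<omega>. (user_rv \<omega>, \<lambda>n. scheme_ans n k \<omega>)) = 0"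
proof -
  let ?O = "others_rv k" and ?Y = "\<lambda>\<omega>. (user_rv \<omega>, \<lambda>n. scheme_ans n k \<omega>)"
  note b = qbase_gt_1[where 'f='f] and fin = finite_scheme_M
  have "scheme_H (\<lambda>\<omega>. (?O \<omega>, ?Y \<omega>)) = scheme_H (\<lambda>\<omega>. (fst \<omega>, user_rv \<omega>, snd (snd \<omega>)))"
    by (rule rv_ent_partition_cong)
      (auto simp: sample_rv_simps dest: scheme_view_determines_sample[of _ _ k])
  also have "\<dots> = 3 + scheme_H user_rv + 1"
    using rv_ent_joint[where 'f='f, OF finite_scheme_user finite_scheme_key, of "qbase TYPE('f)" "\<lambda>w. w" "\<lambda>f. f" "\<lambda>r. r"]
      rv_ent_joint_user[where 'f='f, OF finite_scheme_user finite_scheme_key, of "qbase TYPE('f)"]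
      rv_ent_uniform_fun[where 'f='f and 'n=3] scheme_key_ent
    by (simp add: rv_ent_id)
  finally have sample: "scheme_H (\<lambda>\<omega>. (?O \<omega>, ?Y \<omega>)) = scheme_H user_rv + 4" by simp
  have answer: "scheme_H (scheme_ans n k) \<le> 1" for n
  proof -
    have "scheme_H (scheme_ans n k) = scheme_H (\<lambda>\<omega>. (from_nat (scheme_ans n k \<omega>) :: 'f))"
      by (rule rv_ent_partition_cong) (auto simp: sample_rv_simps scheme_answer_def)
    then show ?thesis
      using rv_ent_le_one[OF fin] by simp
  qed
  have "scheme_H ?Y \<le> scheme_H user_rv + scheme_H (\<lambda>\<omega>. (scheme_ans 0 k \<omega>, scheme_ans 1 k \<omega>))"
    by (rule rv_ent_subadditive_gen[OF b fin]) (auto simp: fun_eq_iff_2[of 0 1])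
  also have "\<dots> \<le> scheme_H user_rv + (scheme_H (scheme_ans 0 k) + scheme_H (scheme_ans 1 k))"
    using rv_ent_subadditive[OF b fin] by simp
  finally have "scheme_H ?Y \<le> scheme_H user_rv + 2"
    using answer[of 0] answer[of 1] by simp
  then have "mut_info (qbase TYPE('f)) scheme_M ?O ?Y \<le> 0"
    using sample rv_ent_others_le_two[OF fin, of k] unfolding mut_info_def by linarith
  then show ?thesis
    using mut_info_nonneg[OF b fin, of ?O ?Y] by simp
qed

lemma scheme_spir: "spir_scheme scheme_user_pmf (scheme_key_pmf TYPE('f)) scheme_query
   (scheme_answer :: 2 \<Rightarrow> nat \<Rightarrow> (3 \<Rightarrow> 'f) \<Rightarrow> nat \<Rightarrow> nat)"
  unfolding spir_scheme_def
  by (simp add: scheme_reliable scheme_query_view scheme_database_private)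
    (simp add: scheme_user_pmf_def scheme_key_pmf_def)

lemma scheme_upload: "upload scheme_user_pmf scheme_query = 4"
proof -
  have "(\<Union>k. scheme_query n k ` set_pmf scheme_user_pmf) = {0, 1, 2, 3}" for n
    using scheme_query_bij[of n] by (simp add: scheme_user_pmf_def bij_betw_def)
  moreover have "log 2 (4 :: real) = 2"
    using log_nat_power[of 2 2 2] by simp
  ultimately show ?thesis
    by (simp add: upload_def)
qed

lemma scheme_download:
  "download scheme_user_pmf (scheme_key_pmf TYPE('f)) scheme_query (scheme_answer :: 2 \<Rightarrow> nat \<Rightarrow> (3 \<Rightarrow> 'f) \<Rightarrow> nat \<Rightarrow> nat) = 2"
proof -
  have "(\<Union>k. scheme_ans n k ` set_pmf scheme_M) = range (to_nat :: 'f \<Rightarrow> nat)" for n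
  proof
    show "(\<Union>k. scheme_ans n k ` set_pmf scheme_M) \<subseteq> range (to_nat :: 'f \<Rightarrow> nat)"
      by (auto simp: sample_rv_simps scheme_answer_def)
    show "range (to_nat :: 'f \<Rightarrow> nat) \<subseteq> (\<Union>k. scheme_ans n k ` set_pmf scheme_M)"
    proof
      fix x assume "x \<in> range (to_nat :: 'f \<Rightarrow> nat)"
      then obtain c :: 'f where "x = to_nat c"
        by auto
      then have "x = scheme_ans n 0 (\<lambda>_. 0, 0, to_nat c)" and "(\<lambda>_. 0, 0, to_nat c) \<in> set_pmf scheme_M"
        by (simp_all add: sample_rv_simps scheme_answer_def dot3_def set_pmf_scheme_M)
      then show "x \<in> (\<Union>k. scheme_ans n k ` set_pmf scheme_M)"
        by blast
    qed
  qed
  then show ?thesis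
    using qbase_gt_1[where 'f='f] by (simp add: download_def card_image qbase_def)
qed

lemma scheme_cr_amount: "cr_amount TYPE('f) (scheme_key_pmf TYPE('f)) = 1"
  by (simp add: cr_amount_def scheme_key_ent)

end

theorem corollary2:
  fixes fld :: "'f::{finite, field} itself"
  shows "(\<forall>pF pR Q (Ans :: 2 \<Rightarrow> nat \<Rightarrow> (3 \<Rightarrow> 'f) \<Rightarrow> nat \<Rightarrow> nat).
            spir_scheme pF pR Q Ans \<and> upload pF Q = 4 \<longrightarrow>
              upload pF Q + download pF pR Q Ans \<ge> 6 \<and> cr_amount TYPE('f) pR \<ge> 1)
       \<and> (\<exists>pF pR Q (Ans :: 2 \<Rightarrow> nat \<Rightarrow> (3 \<Rightarrow> 'f) \<Rightarrow> nat \<Rightarrow> nat).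
            spir_scheme pF pR Q Ans \<and> upload pF Q = 4 \<and>
            upload pF Q + download pF pR Q Ans = 6 \<and> cr_amount TYPE('f) pR = 1)"
proof (rule conjI, intro allI impI)
  fix pF pR Q and Ans :: "2 \<Rightarrow> nat \<Rightarrow> (3 \<Rightarrow> 'f) \<Rightarrow> nat \<Rightarrow> nat"
  assume h: "spir_scheme pF pR Q Ans \<and> upload pF Q = 4"
  interpret spir pF pR Q Ans
    using h by (simp add: spir_def)
  show "upload pF Q + download pF pR Q Ans \<ge> 6 \<and> cr_amount TYPE('f) pR \<ge> 1"
    using h download_ge_two cr_amount_ge_one by simp
next
  show "\<exists>pF pR Q (Ans :: 2 \<Rightarrow> nat \<Rightarrow> (3 \<Rightarrow> 'f) \<Rightarrow> nat \<Rightarrow> nat).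
      spir_scheme pF pR Q Ans \<and> upload pF Q = 4 \<and>
      upload pF Q + download pF pR Q Ans = 6 \<and> cr_amount TYPE('f) pR = 1"
    using scheme_spir scheme_upload scheme_download scheme_cr_amount by fastforce
qed

end
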